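(* Let $G$ be a finite group with identity $e$, $R[G]$ its real group algebra, $S=\{x\in R[G]:\sum_gx_g=1,\ x_g\ge0\ \forall g\}$, and $x\in S$. Then: (1) the elements $e,x,x^2,\dots,x^{n_x-1}$ of $R[G]$ are linearly independent; (2) for nonnegative integers $r_1,r_2$, one has $c_xx^{r_1}=c_xx^{r_2}$ if and only if $r_1\equiv r_2\pmod{m_x}$.
   Context: $\mathrm{Supp}(y)=\{g:y_g\ne0\}$, $\mathbb N=\{1,2,\dots\}$, $x^0=e$. For $x\in S$: $n_x=\min\{k\in\mathbb N:(x^k)_e\ne0\}$; $G_x$ is the subgroup of $G$ generated by $\mathrm{Supp}(x^{n_x})$; $c_x=\frac1{|G_x|}\sum_{g\in G_x}g$; $m_x=\min\{k\in\mathbb N:\mathrm{Supp}(x^k)\subset G_x\}$. *)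

theory Defs
  imports "HOL-Algebra.Algebra" "HOL-Number_Theory.Cong"
begin

text \<open>Real group algebra R[G] of a finite group G (HOL-Algebra locale):
 elements are functions carrier G -> real, extended by 0 outside the carrier.\<close>

definition ga_mult :: "('g, 'b) monoid_scheme \<Rightarrow> ('g \<Rightarrow> real) \<Rightarrow> ('g \<Rightarrow> real) \<Rightarrow> ('g \<Rightarrow> real)" where
  "ga_mult G x y = (\<lambda>g. if g \<in> carrier G
      then (\<Sum>h\<in>carrier G. x h * y (inv\<^bsub>G\<^esub> h \<otimes>\<^bsub>G\<^esub> g)) else 0)"

definition ga_one :: "('g, 'b) monoid_scheme \<Rightarrow> ('g \<Rightarrow> real)" where
  "ga_one G = (\<lambda>g. if g = \<one>\<^bsub>G\<^esub> then 1 else 0)"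

primrec ga_pow :: "('g, 'b) monoid_scheme \<Rightarrow> ('g \<Rightarrow> real) \<Rightarrow> nat \<Rightarrow> ('g \<Rightarrow> real)" where
  "ga_pow G x 0 = ga_one G"
| "ga_pow G x (Suc k) = ga_mult G (ga_pow G x k) x"

definition simplex :: "('g, 'b) monoid_scheme \<Rightarrow> ('g \<Rightarrow> real) set" where
  "simplex G = {x. (\<forall>g. g \<notin> carrier G \<longrightarrow> x g = 0) \<and> (\<forall>g\<in>carrier G. x g \<ge> 0)
                   \<and> (\<Sum>g\<in>carrier G. x g) = 1}"

definition ga_supp :: "('g, 'b) monoid_scheme \<Rightarrow> ('g \<Rightarrow> real) \<Rightarrow> 'g set" where
  "ga_supp G y = {g \<in> carrier G. y g \<noteq> 0}"

definition n_x :: "('g, 'b) monoid_scheme \<Rightarrow> ('g \<Rightarrow> real) \<Rightarrow> nat" where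
  "n_x G x = (LEAST k. k \<ge> 1 \<and> ga_pow G x k \<one>\<^bsub>G\<^esub> \<noteq> 0)"

definition G_x :: "('g, 'b) monoid_scheme \<Rightarrow> ('g \<Rightarrow> real) \<Rightarrow> 'g set" where
  "G_x G x = generate G (ga_supp G (ga_pow G x (n_x G x)))"

definition c_x :: "('g, 'b) monoid_scheme \<Rightarrow> ('g \<Rightarrow> real) \<Rightarrow> ('g \<Rightarrow> real)" where
  "c_x G x = (\<lambda>g. if g \<in> G_x G x then 1 / real (card (G_x G x)) else 0)"

definition m_x :: "('g, 'b) monoid_scheme \<Rightarrow> ('g \<Rightarrow> real) \<Rightarrow> nat" where
  "m_x G x = (LEAST k. k \<ge> 1 \<and> ga_supp G (ga_pow G x k) \<subseteq> G_x G x)"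

end

theory Submission
  imports Defs
begin

(* Since x has nonnegative entries, the support of x^k is the k-fold product set of supp x;
   in particular supp x^(k+l) = supp x^k supp x^l. Because x^k(e) = 0 for 0 < k < n_x, multiplying
   a vanishing combination of e, x, ..., x^(n_x-1) by x^(n_x-j), where j is the top index with a
   nonzero coefficient, and evaluating at e isolates that coefficient.
   For the second part let H = G_x. As supp x^(k n_x) is contained in H, any two elements a, b of
   supp x^k satisfy b a^-1 in H, so supp x^k lies in the right coset H a and c_x x^k is the uniform
   distribution on H a. Hence c_x x^(d+r) = c_x x^r iff supp x^d is contained in H, and the set of
   such d is closed under addition and cancellation, so it consists of the multiples of its least
   positive element m_x. *)

lemma iff_dvd_of_add_cancel_closed:
  fixes P :: "nat \<Rightarrow> bool"
  assumes m: "P m" "0 < m" and below_m: "\<And>k. 0 < k \<Longrightarrow> k < m \<Longrightarrow> \<not> P k"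
    and add: "\<And>a b. P a \<Longrightarrow> P b \<Longrightarrow> P (a + b)"
    and cancel: "\<And>a b. P a \<Longrightarrow> P (a + b) \<Longrightarrow> P b"
  shows "P d \<longleftrightarrow> m dvd d"
proof -
  have multiples: "P (q * m)" for q
  proof (induction q)
    case 0
    show ?case using cancel[of m 0] m by simp
  next
    case (Suc q)
    then show ?case using add[OF m(1)] by simp
  qed
  show ?thesis
  proof
    assume "P d"
    then have "P ((d div m) * m + d mod m)" by simp
    then have "P (d mod m)" using cancel multiples by blast
    moreover have "d mod m < m" using m(2) by simp
    ultimately have "d mod m = 0" using below_m by blast
    then show "m dvd d" by auto
  qed (auto simp: multiples mult.commute elim!: dvdE)
qed

lemma (in group) sum_inv_mult_left:
  assumes "h \<in> carrier G"
  shows "(\<Sum>g\<in>carrier G. f (inv h \<otimes> g)) = (\<Sum>g\<in>carrier G. f g)"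
proof (rule sum.reindex_bij_betw)
  show "bij_betw (\<lambda>g. inv h \<otimes> g) (carrier G) (carrier G)"
    by (rule bij_betwI[where g = "\<lambda>g. h \<otimes> g"]) (use assms in \<open>auto simp: m_assoc[symmetric]\<close>)
qed

lemma (in group) sum_inv_mult_subgroup:
  assumes "subgroup H G" "g \<in> carrier G"
  shows "(\<Sum>h\<in>H. f (inv h \<otimes> g)) = (\<Sum>z\<in>H #> g. f z)"
proof (rule sum.reindex_bij_betw)
  interpret subgroup H G by fact
  show "bij_betw (\<lambda>h. inv h \<otimes> g) H (H #> g)"
  proof (rule bij_betwI[where g = "\<lambda>z. g \<otimes> inv z"])
    show "(\<lambda>h. inv h \<otimes> g) \<in> H \<rightarrow> (H #> g)"
      using assms(2) by (auto intro: rcosI)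
    show "(\<lambda>z. g \<otimes> inv z) \<in> (H #> g) \<rightarrow> H"
      using assms(2) by (auto simp: r_coset_def inv_mult_group m_assoc[symmetric])
  qed (use assms(2) in \<open>auto simp: r_coset_def inv_mult_group m_assoc[symmetric]\<close>)
qed

lemma (in group) rcos_mult_eq_iff:
  assumes "subgroup H G" "a \<in> carrier G" "b \<in> carrier G"
  shows "H #> (b \<otimes> a) = H #> a \<longleftrightarrow> b \<in> H"
proof -
  have "H #> (b \<otimes> a) = H #> a \<longleftrightarrow> b \<otimes> a \<in> H #> a"
    using assms by (metis m_closed repr_independence repr_independenceD)
  also have "\<dots> \<longleftrightarrow> b \<in> H"
    using assms subgroup.rcos_module[OF assms(1) is_group] by (simp add: m_assoc)
  finally show ?thesis .
qed

lemma ga_mult_sum_left: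
  "ga_mult G (\<lambda>g. \<Sum>k\<in>K. a k * f k g) y = (\<lambda>g. \<Sum>k\<in>K. a k * ga_mult G (f k) y g)"
  unfolding ga_mult_def
  by (auto simp: sum_distrib_left sum_distrib_right mult.assoc intro!: ext sum.swap)

lemma ga_pow_combination_shift:
  assumes "(\<lambda>g. \<Sum>k\<in>K. a k * ga_pow G x k g) = (\<lambda>g. 0)"
  shows "(\<lambda>g. \<Sum>k\<in>K. a k * ga_pow G x (k + p) g) = (\<lambda>g. 0)"
proof (induction p)
  case 0
  show ?case using assms by simp
next
  case (Suc p)
  have "ga_mult G (\<lambda>g. \<Sum>k\<in>K. a k * ga_pow G x (k + p) g) x = (\<lambda>g. 0)"
    unfolding Suc ga_mult_def by (rule ext) simp
  then show ?case by (simp add: ga_mult_sum_left)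
qed

lemma (in monoid) ga_supp_ga_one: "ga_supp G (ga_one G) = {\<one>}"
  by (auto simp: ga_supp_def ga_one_def)

locale finite_group = group +
  assumes finite_carrier: "finite (carrier G)"

context finite_group
begin

lemma simplex_ga_one: "ga_one G \<in> simplex G"
  using finite_carrier by (auto simp: simplex_def ga_one_def)

lemma simplex_ga_mult:
  assumes y: "y \<in> simplex G" and z: "z \<in> simplex G"
  shows "ga_mult G y z \<in> simplex G"
proof -
  have "(\<Sum>g\<in>carrier G. ga_mult G y z g)
      = (\<Sum>g\<in>carrier G. \<Sum>h\<in>carrier G. y h * z (inv h \<otimes> g))"
    by (simp add: ga_mult_def)
  also have "\<dots> = (\<Sum>h\<in>carrier G. y h * (\<Sum>g\<in>carrier G. z (inv h \<otimes> g)))"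
    by (subst sum.swap) (simp add: sum_distrib_left)
  also have "\<dots> = 1"
    using y z by (simp add: sum_inv_mult_left simplex_def)
  finally show ?thesis
    using y z by (auto simp: simplex_def ga_mult_def intro!: sum_nonneg)
qed

lemma simplex_ga_pow: "x \<in> simplex G \<Longrightarrow> ga_pow G x k \<in> simplex G"
  by (induction k) (simp_all add: simplex_ga_one simplex_ga_mult)

lemma simplex_nonneg: "y \<in> simplex G \<Longrightarrow> 0 \<le> y g"
  by (cases "g \<in> carrier G") (auto simp: simplex_def)

lemma ga_supp_simplex_nonempty:
  assumes "y \<in> simplex G"
  shows "ga_supp G y \<noteq> {}"
proof
  assume "ga_supp G y = {}"
  then have "(\<Sum>g\<in>carrier G. y g) = 0"
    by (intro sum.neutral) (auto simp: ga_supp_def)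
  then show False
    using assms by (simp add: simplex_def)
qed

lemma ga_supp_ga_mult:
  assumes y: "y \<in> simplex G" and z: "z \<in> simplex G"
  shows "ga_supp G (ga_mult G y z) = ga_supp G y <#> ga_supp G z"
proof (intro Set.set_eqI iffI)
  fix g
  assume "g \<in> ga_supp G (ga_mult G y z)"
  then obtain h where h: "h \<in> carrier G" "y h \<noteq> 0" "z (inv h \<otimes> g) \<noteq> 0" and g: "g \<in> carrier G"
    by (auto simp: ga_supp_def ga_mult_def elim!: sum.not_neutral_contains_not_neutral)
  have "g = h \<otimes> (inv h \<otimes> g)"
    using h g by (simp add: m_assoc[symmetric])
  then show "g \<in> ga_supp G y <#> ga_supp G z"
    using h g unfolding ga_supp_def set_mult_def by blast
next
  fix g
  assume "g \<in> ga_supp G y <#> ga_supp G z"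
  then obtain h k where hk: "h \<in> ga_supp G y" "k \<in> ga_supp G z" "g = h \<otimes> k"
    unfolding set_mult_def by blast
  then have car: "h \<in> carrier G" "k \<in> carrier G" "g \<in> carrier G"
    by (auto simp: ga_supp_def)
  have "inv h \<otimes> g = k"
    using hk car by (simp add: m_assoc[symmetric])
  then have "0 < y h * z (inv h \<otimes> g)"
    using hk y z by (simp add: ga_supp_def simplex_nonneg less_le)
  also have "\<dots> \<le> (\<Sum>h'\<in>carrier G. y h' * z (inv h' \<otimes> g))"
    using car y z by (intro member_le_sum) (simp_all add: finite_carrier simplex_nonneg)
  finally show "g \<in> ga_supp G (ga_mult G y z)"
    using car by (simp add: ga_supp_def ga_mult_def)
qed

lemma sum_simplex_supp_subset:
  assumes "y \<in> simplex G" "ga_supp G y \<subseteq> A" "A \<subseteq> carrier G"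
  shows "(\<Sum>g\<in>A. y g) = 1"
proof -
  have "(\<Sum>g\<in>A. y g) = (\<Sum>g\<in>carrier G. y g)"
    using assms finite_carrier by (intro sum.mono_neutral_left) (auto simp: ga_supp_def)
  then show ?thesis
    using assms(1) by (simp add: simplex_def)
qed

lemma ga_mult_uniform_subgroup:
  assumes H: "subgroup H G" and y: "y \<in> simplex G"
    and a: "a \<in> carrier G" and supp: "ga_supp G y \<subseteq> H #> a"
  shows "ga_mult G (\<lambda>g. if g \<in> H then 1 / real (card H) else 0) y
       = (\<lambda>g. if g \<in> H #> a then 1 / real (card H) else 0)"
proof
  fix g
  show "ga_mult G (\<lambda>g. if g \<in> H then 1 / real (card H) else 0) y g
      = (if g \<in> H #> a then 1 / real (card H) else 0)"
  proof (cases "g \<in> carrier G")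
    case False
    then show ?thesis
      using a H by (auto simp: ga_mult_def r_coset_def dest: subgroup.subset)
  next
    case g: True
    have HG: "H \<subseteq> carrier G"
      using H by (rule subgroup.subset)
    have "ga_mult G (\<lambda>g. if g \<in> H then 1 / real (card H) else 0) y g
        = (\<Sum>h\<in>H. y (inv h \<otimes> g)) / real (card H)"
      using g HG finite_carrier
      by (simp add: ga_mult_def if_distrib[of "\<lambda>c. c * _"] sum.If_cases Int_absorb1 sum_divide_distrib)
    also have "(\<Sum>h\<in>H. y (inv h \<otimes> g)) = (\<Sum>z\<in>H #> g. y z)"
      using H g by (rule sum_inv_mult_subgroup)
    also have "\<dots> = (if g \<in> H #> a then 1 else 0)"
    proof (cases "g \<in> H #> a")
      case True
      then have "H #> g = H #> a"
        using repr_independence[OF True a H] by simp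
      then show ?thesis
        using True sum_simplex_supp_subset[OF y supp] a HG r_coset_subset_G by auto
    next
      case False
      have "(H #> g) \<inter> (H #> a) = {}"
      proof (rule ccontr)
        assume "(H #> g) \<inter> (H #> a) \<noteq> {}"
        then obtain z where "z \<in> H #> g" "z \<in> H #> a"
          by blast
        then have "H #> g = H #> a"
          using repr_independence[OF _ g H] repr_independence[OF _ a H] by metis
        then show False
          using False rcos_self[OF g H] by simp
      qed
      then show ?thesis
        using False supp r_coset_subset_G[OF HG g] by (auto simp: ga_supp_def intro!: sum.neutral)
    qed
    finally show ?thesis by simp
  qed
qed

end

locale simplex_element = finite_group +
  fixes x :: "'a \<Rightarrow> real"
  assumes x_in_simplex: "x \<in> simplex G"
begin

abbreviation supp_pow :: "nat \<Rightarrow> 'a set" where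
  "supp_pow k \<equiv> ga_supp G (ga_pow G x k)"

lemma supp_pow_subset_carrier: "supp_pow k \<subseteq> carrier G"
  by (auto simp: ga_supp_def)

lemma supp_pow_nonempty: "supp_pow k \<noteq> {}"
  by (intro ga_supp_simplex_nonempty simplex_ga_pow x_in_simplex)

lemma supp_pow_Suc: "supp_pow (Suc k) = supp_pow k <#> ga_supp G x"
  using ga_supp_ga_mult[OF simplex_ga_pow[OF x_in_simplex] x_in_simplex] by simp

lemma supp_pow_add: "supp_pow (k + l) = supp_pow k <#> supp_pow l"
proof (induction l)
  case 0
  show ?case
    using supp_pow_subset_carrier
    by (simp add: ga_supp_ga_one r_coset_eq_set_mult[symmetric] coset_mult_one)
next
  case (Suc l)
  have "supp_pow (k + Suc l) = (supp_pow k <#> supp_pow l) <#> ga_supp G x"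
    unfolding add_Suc_right supp_pow_Suc Suc ..
  also have "\<dots> = supp_pow k <#> supp_pow (Suc l)"
    unfolding supp_pow_Suc
    by (rule set_mult_assoc) (auto simp: ga_supp_def)
  finally show ?case .
qed

lemma mult_mem_supp_pow_add:
  "a \<in> supp_pow k \<Longrightarrow> b \<in> supp_pow l \<Longrightarrow> a \<otimes> b \<in> supp_pow (k + l)"
  unfolding supp_pow_add set_mult_def by blast

lemma pow_mem_supp_pow: "a \<in> ga_supp G x \<Longrightarrow> a [^] k \<in> supp_pow k"
proof (induction k)
  case 0
  show ?case by (simp add: ga_supp_ga_one)
next
  case (Suc k)
  then have "a [^] k \<otimes> a \<in> supp_pow (Suc k)"
    unfolding supp_pow_Suc set_mult_def by blast
  then show ?case
    by simp
qed

lemma n_x_spec: "1 \<le> n_x G x \<and> ga_pow G x (n_x G x) \<one> \<noteq> 0"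
proof -
  obtain a where a: "a \<in> ga_supp G x"
    using ga_supp_simplex_nonempty[OF x_in_simplex] by blast
  then have "a \<in> carrier G"
    by (simp add: ga_supp_def)
  then have "1 \<le> ord a \<and> \<one> \<in> supp_pow (ord a)"
    using pow_mem_supp_pow[OF a, of "ord a"] ord_ge_1[OF finite_carrier] by simp
  then have "\<exists>k. 1 \<le> k \<and> ga_pow G x k \<one> \<noteq> 0"
    by (auto simp: ga_supp_def)
  then show ?thesis
    unfolding n_x_def by (rule LeastI_ex)
qed

lemma ga_pow_one_below_n_x: "0 < k \<Longrightarrow> k < n_x G x \<Longrightarrow> ga_pow G x k \<one> = 0"
  unfolding n_x_def using not_less_Least by fastforce

lemma ga_pow_lin_indep:
  assumes comb: "(\<lambda>g. \<Sum>i<n_x G x. a i * ga_pow G x i g) = (\<lambda>g. 0)" and k: "k < n_x G x"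
  shows "a k = 0"
proof (rule ccontr)
  let ?n = "n_x G x"
  assume "a k \<noteq> 0"
  define j where "j = Max {i. i < ?n \<and> a i \<noteq> 0}"
  have "j \<in> {i. i < ?n \<and> a i \<noteq> 0}"
    unfolding j_def using k \<open>a k \<noteq> 0\<close> by (intro Max_in) auto
  then have j: "j < ?n" "a j \<noteq> 0"
    by simp_all
  have above_j: "a i = 0" if "j < i" "i < ?n" for i
    using Max_ge[of "{i. i < ?n \<and> a i \<noteq> 0}" i] that unfolding j_def by fastforce
  have "0 = (\<Sum>i<?n. a i * ga_pow G x (i + (?n - j)) \<one>)"
    using fun_cong[OF ga_pow_combination_shift[OF comb, of "?n - j"], of \<one>] by simp
  also have "\<dots> = (\<Sum>i<?n. if i = j then a j * ga_pow G x ?n \<one> else 0)"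
  proof (rule sum.cong)
    fix i
    assume "i \<in> {..<?n}"
    then show "a i * ga_pow G x (i + (?n - j)) \<one> = (if i = j then a j * ga_pow G x ?n \<one> else 0)"
      using j above_j[of i] ga_pow_one_below_n_x[of "i + (?n - j)"]
      by (cases i j rule: linorder_cases) auto
  qed simp
  also have "\<dots> = a j * ga_pow G x ?n \<one>"
    using j by simp
  finally show False
    using j n_x_spec by simp
qed

lemma subgroup_G_x: "subgroup (G_x G x) G"
  unfolding G_x_def by (intro generate_is_subgroup supp_pow_subset_carrier)

lemma supp_pow_n_x_subset: "supp_pow (n_x G x) \<subseteq> G_x G x"
  unfolding G_x_def by (auto intro: generate.incl)

lemma supp_pow_mult_n_x_subset: "supp_pow (k * n_x G x) \<subseteq> G_x G x"
proof (induction k)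
  case 0
  show ?case
    using subgroup.one_closed[OF subgroup_G_x] by (simp add: ga_supp_ga_one)
next
  case (Suc k)
  then show ?case
    using supp_pow_n_x_subset subgroup.m_closed[OF subgroup_G_x]
    by (auto simp: supp_pow_add set_mult_def)
qed

lemma supp_pow_subset_rcos:
  assumes a: "a \<in> supp_pow k"
  shows "supp_pow k \<subseteq> G_x G x #> a"
proof
  fix b
  assume b: "b \<in> supp_pow k"
  \<comment> \<open>c completes both a and b to elements of supp_pow (k * n_x G x), which lies in G_x G x.\<close>
  obtain c where c: "c \<in> supp_pow (k * (n_x G x - 1))"
    using supp_pow_nonempty by blast
  have "k + k * (n_x G x - 1) = k * n_x G x"
    using n_x_spec by (simp add: algebra_simps)
  then have "a \<otimes> c \<in> G_x G x" "b \<otimes> c \<in> G_x G x"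
    using mult_mem_supp_pow_add[OF a c] mult_mem_supp_pow_add[OF b c] supp_pow_mult_n_x_subset
    by auto
  then have "(b \<otimes> c) \<otimes> inv (a \<otimes> c) \<in> G_x G x"
    using subgroup_G_x by (simp add: subgroup.m_closed subgroup.m_inv_closed)
  moreover have car: "a \<in> carrier G" "b \<in> carrier G" "c \<in> carrier G"
    using a b c supp_pow_subset_carrier by blast+
  moreover have "(b \<otimes> c) \<otimes> inv (a \<otimes> c) = b \<otimes> inv a"
    using car by (simp add: inv_mult_group m_assoc[symmetric]) (simp add: m_assoc)
  ultimately have "b \<otimes> inv a \<in> G_x G x"
    by simp
  then show "b \<in> G_x G x #> a"
    using car subgroup.rcos_module[OF subgroup_G_x is_group] by simp
qed

lemma supp_pow_subset_G_x_iff: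
  assumes b: "b \<in> supp_pow d"
  shows "supp_pow d \<subseteq> G_x G x \<longleftrightarrow> b \<in> G_x G x"
proof
  assume "b \<in> G_x G x"
  then have "G_x G x #> b = G_x G x"
    by (rule subgroup.rcos_const[OF subgroup_G_x is_group])
  then show "supp_pow d \<subseteq> G_x G x"
    using supp_pow_subset_rcos[OF b] by simp
qed (use b in blast)

lemma m_x_spec: "1 \<le> m_x G x \<and> supp_pow (m_x G x) \<subseteq> G_x G x"
  unfolding m_x_def using n_x_spec supp_pow_n_x_subset by (intro LeastI) auto

lemma supp_pow_below_m_x: "0 < k \<Longrightarrow> k < m_x G x \<Longrightarrow> \<not> supp_pow k \<subseteq> G_x G x"
  unfolding m_x_def using not_less_Least by fastforce

lemma supp_pow_subset_G_x_iff_dvd: "supp_pow d \<subseteq> G_x G x \<longleftrightarrow> m_x G x dvd d"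
proof (rule iff_dvd_of_add_cancel_closed[where P = "\<lambda>d. supp_pow d \<subseteq> G_x G x"])
  show "supp_pow (m_x G x) \<subseteq> G_x G x" "0 < m_x G x"
    using m_x_spec by auto
  show "\<And>k. 0 < k \<Longrightarrow> k < m_x G x \<Longrightarrow> \<not> supp_pow k \<subseteq> G_x G x"
    by (rule supp_pow_below_m_x)
next
  fix k l
  obtain a b where a: "a \<in> supp_pow k" and b: "b \<in> supp_pow l"
    using supp_pow_nonempty by blast
  have ab: "a \<otimes> b \<in> supp_pow (k + l)"
    using a b by (rule mult_mem_supp_pow_add)
  have car: "a \<in> carrier G" "b \<in> carrier G"
    using a b supp_pow_subset_carrier by blast+
  have H: "subgroup (G_x G x) G"
    by (rule subgroup_G_x)
  show "supp_pow (k + l) \<subseteq> G_x G x"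
    if "supp_pow k \<subseteq> G_x G x" "supp_pow l \<subseteq> G_x G x"
  proof -
    have "a \<otimes> b \<in> G_x G x"
      using that a b subgroup.m_closed[OF H] by blast
    then show ?thesis
      using supp_pow_subset_G_x_iff[OF ab] by simp
  qed
  show "supp_pow l \<subseteq> G_x G x"
    if "supp_pow k \<subseteq> G_x G x" "supp_pow (k + l) \<subseteq> G_x G x"
  proof -
    have "inv a \<otimes> (a \<otimes> b) \<in> G_x G x"
      using that a ab subgroup.m_closed[OF H] subgroup.m_inv_closed[OF H] by blast
    then have "b \<in> G_x G x"
      using car by (simp add: m_assoc[symmetric])
    then show ?thesis
      using supp_pow_subset_G_x_iff[OF b] by simp
  qed
qed

lemma c_x_mult_ga_pow:
  assumes "a \<in> supp_pow r"
  shows "ga_mult G (c_x G x) (ga_pow G x r)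
       = (\<lambda>g. if g \<in> G_x G x #> a then 1 / real (card (G_x G x)) else 0)"
  unfolding c_x_def
  using subgroup_G_x simplex_ga_pow[OF x_in_simplex] _ supp_pow_subset_rcos[OF assms]
  by (rule ga_mult_uniform_subgroup) (use assms supp_pow_subset_carrier in blast)

lemma c_x_mult_ga_pow_add_eq_iff:
  "ga_mult G (c_x G x) (ga_pow G x (d + r)) = ga_mult G (c_x G x) (ga_pow G x r)
   \<longleftrightarrow> m_x G x dvd d"
proof -
  obtain a b where a: "a \<in> supp_pow r" and b: "b \<in> supp_pow d"
    using supp_pow_nonempty by blast
  have car: "a \<in> carrier G" "b \<in> carrier G"
    using a b supp_pow_subset_carrier by blast+
  have uniform_eq_iff: "(\<lambda>g. if g \<in> A then c else 0) = (\<lambda>g. if g \<in> B then c else 0) \<longleftrightarrow> A = B"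
    if "c \<noteq> 0" for A B and c :: real
  proof
    assume eq: "(\<lambda>g. if g \<in> A then c else 0) = (\<lambda>g. if g \<in> B then c else 0)"
    have "g \<in> A \<longleftrightarrow> g \<in> B" for g
      using fun_cong[OF eq, of g] that by (auto split: if_splits)
    then show "A = B"
      by blast
  qed simp
  have "card (G_x G x) \<noteq> 0"
    using subgroup.one_closed[OF subgroup_G_x] subgroup.subset[OF subgroup_G_x]
      finite_subset[OF _ finite_carrier] by (auto simp: card_eq_0_iff)
  then have "ga_mult G (c_x G x) (ga_pow G x (d + r)) = ga_mult G (c_x G x) (ga_pow G x r)
      \<longleftrightarrow> G_x G x #> (b \<otimes> a) = G_x G x #> a"
    by (simp add: c_x_mult_ga_pow[OF mult_mem_supp_pow_add[OF b a]] c_x_mult_ga_pow[OF a] uniform_eq_iff)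
  also have "\<dots> \<longleftrightarrow> b \<in> G_x G x"
    using subgroup_G_x car by (rule rcos_mult_eq_iff)
  also have "\<dots> \<longleftrightarrow> m_x G x dvd d"
    using supp_pow_subset_G_x_iff[OF b] supp_pow_subset_G_x_iff_dvd by simp
  finally show ?thesis .
qed

lemma c_x_mult_ga_pow_eq_iff:
  "ga_mult G (c_x G x) (ga_pow G x r1) = ga_mult G (c_x G x) (ga_pow G x r2)
   \<longleftrightarrow> [r1 = r2] (mod m_x G x)"
proof -
  have shifted: "ga_mult G (c_x G x) (ga_pow G x (d + r)) = ga_mult G (c_x G x) (ga_pow G x r)
      \<longleftrightarrow> [d + r = r] (mod m_x G x)" for d r
    by (simp add: c_x_mult_ga_pow_add_eq_iff cong_add_rcancel_0_nat cong_0_iff)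
  obtain d where "r2 = d + r1 \<or> r1 = d + r2"
    by (metis le_add_diff_inverse2 nat_le_linear)
  then show ?thesis
  proof
    assume "r2 = d + r1"
    then show ?thesis
      using shifted[of d r1] by (metis cong_sym_eq)
  next
    assume "r1 = d + r2"
    then show ?thesis
      using shifted[of d r2] by simp
  qed
qed

end

theorem proposition2:
  fixes G :: "('g, 'b) monoid_scheme" and x :: "'g \<Rightarrow> real"
  assumes "group G" and "finite (carrier G)" and "x \<in> simplex G"
  shows "(\<forall>a :: nat \<Rightarrow> real.
            (\<lambda>g. \<Sum>k<n_x G x. a k * ga_pow G x k g) = (\<lambda>g. 0)
            \<longrightarrow> (\<forall>k<n_x G x. a k = 0))
       \<and> (\<forall>r1 r2 :: nat.
            ga_mult G (c_x G x) (ga_pow G x r1) = ga_mult G (c_x G x) (ga_pow G x r2)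
            \<longleftrightarrow> [r1 = r2] (mod m_x G x))"
proof -
  interpret simplex_element G x
    using assms
    by (simp add: simplex_element_def simplex_element_axioms_def finite_group_def finite_group_axioms_def)
  show ?thesis
    using ga_pow_lin_indep c_x_mult_ga_pow_eq_iff by blast
qed

end
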